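(* Let $f:\mathbb R^d\to[0,\infty)$ satisfy the hydrodynamic bounds, let $q>d+\gamma+2s$, $N>0$, $g(v)=N\min(1,|v|^{-q})$, and assume $f\le g$ on $\mathbb R^d$. Then for all $|v|\ge2$, $$\mathcal B_{3,q}(f,f)(v)\lesssim (1+q)^2\Big((1+q)^{q-(d-1)}+\frac1{q-(d+\gamma+2s)}\Big)|v|^{\gamma-2}g(v).$$
   Context: Fix $d\ge2$, $s\in(0,1)$, $\gamma\in\mathbb R$ with $\gamma+2s\in[0,2]$, and $\tilde b$ smooth with $0<\tilde b_0\le\tilde b\le\tilde b_1$. Hydrodynamic bounds: $m_0\le\int f\le M_0$, $\int f|v|^2\le E_0$, $\int f\ln f\le H_0$. $A\lesssim B$ means $A\le CB$ with $C$ depending only on $d,\gamma,s,\tilde b_0,\tilde b_1,m_0,M_0,E_0,H_0$. Let $c_1(q)=\frac1{20q}$ and $c_3(q)=\frac1{2(1+q)}$. For $v,v',v'_*$ with $(v'-v)\perp(v'_*-v)$ set $v_*=v'+v'_*-v$ and let $\theta$ be the angle between $v-v_*$ and $v'-v'_*$. Define $$\mathcal B_{3,q}(f_1,f_2)(v)=\int_{c_3(q)|v|\le|v'|<|v|/2}\frac{f_2(v')-f_2(v)}{|v'-v|^{d+2s}}\int_{v'_*\in v+(v-v')^\perp,\ |v'_*|\ge c_1(q)|v|}f_1(v'_* )|v-v'_*|^{\gamma+2s+1}\tilde b(\cos\theta)\,dv'_*\,dv',$$ the inner integral over the affine hyperplane through $v$ orthogonal to $v-v'$ with $(d-1)$-dimensional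 Lebesgue measure. *)

theory Defs
  imports "HOL-Analysis.Analysis"
begin

definition smooth_on_interval :: "(real \<Rightarrow> real) \<Rightarrow> bool" where
  "smooth_on_interval b \<longleftrightarrow>
     (\<exists>D :: nat \<Rightarrow> real \<Rightarrow> real. D 0 = b \<and>
        (\<forall>n. \<forall>x\<in>{-1..1}. (D n has_real_derivative D (Suc n) x) (at x within {-1..1})))"

definition c1 :: "real \<Rightarrow> real" where "c1 q = 1 / (20 * q)"
definition c3 :: "real \<Rightarrow> real" where "c3 q = 1 / (2 * (1 + q))"

text \<open>Integral over the affine hyperplane through p orthogonal to u (u nonzero) with respect to
  (d-1)-dimensional Lebesgue measure.  With n the unit normal, Fubini gives
  integral over H of F = integral over the slab 0 <= x.n <= 1 of F(p + orthogonal projection of x).\<close>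
definition hyperplane_integral :: "'a::euclidean_space \<Rightarrow> 'a \<Rightarrow> ('a \<Rightarrow> real) \<Rightarrow> real" where
  "hyperplane_integral p u F =
     (let n = u /\<^sub>R norm u in
      LINT x : {x. 0 \<le> x \<bullet> n \<and> x \<bullet> n \<le> 1} | lborel. F (p + (x - (x \<bullet> n) *\<^sub>R n)))"

definition cos_theta :: "'a::euclidean_space \<Rightarrow> 'a \<Rightarrow> 'a \<Rightarrow> real" where
  "cos_theta v v' v's =
     (let vs = v' + v's - v in
      ((v - vs) \<bullet> (v' - v's)) / (norm (v - vs) * norm (v' - v's)))"

definition B3 :: "real \<Rightarrow> real \<Rightarrow> (real \<Rightarrow> real) \<Rightarrow> real \<Rightarrow>
                   ('a::euclidean_space \<Rightarrow> real) \<Rightarrow> ('a \<Rightarrow> real) \<Rightarrow> 'a \<Rightarrow> real" where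
  "B3 \<gamma> s b q f1 f2 v =
     (LINT v' : {v'. c3 q * norm v \<le> norm v' \<and> norm v' < norm v / 2} | lborel.
        (f2 v' - f2 v) / norm (v' - v) powr (real DIM('a) + 2 * s) *
        hyperplane_integral v (v - v')
          (\<lambda>v's. if c1 q * norm v \<le> norm v's
                 then f1 v's * norm (v - v's) powr (\<gamma> + 2 * s + 1) * b (cos_theta v v' v's)
                 else 0))"

definition hydro_bounds :: "real \<Rightarrow> real \<Rightarrow> real \<Rightarrow> real \<Rightarrow> ('a::euclidean_space \<Rightarrow> real) \<Rightarrow> bool" where
  "hydro_bounds m0 M0 E0 H0 f \<longleftrightarrow>
     f \<in> borel_measurable lborel \<and> (\<forall>v. 0 \<le> f v) \<and>
     integrable lborel f \<and> m0 \<le> (\<integral>v. f v \<partial>lborel) \<and> (\<integral>v. f v \<partial>lborel) \<le> M0 \<and>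
     integrable lborel (\<lambda>v. f v * (norm v)\<^sup>2) \<and> (\<integral>v. f v * (norm v)\<^sup>2 \<partial>lborel) \<le> E0 \<and>
     integrable lborel (\<lambda>v. f v * ln (f v)) \<and> (\<integral>v. f v * ln (f v) \<partial>lborel) \<le> H0"

definition gq :: "real \<Rightarrow> real \<Rightarrow> 'a::real_normed_vector \<Rightarrow> real" where
  "gq N q v = N * (if norm v \<le> 1 then 1 else norm v powr (- q))"

end

theory Submission
  imports Defs
begin

(* Drop the negative term -f(v) of B3.  On the region c3(q)|v| <= |v'| < |v|/2 one has
   |v' - v| >= |v|/2 and 1 <= (2(1+q)|v'|/|v|)^2, so the v'-integral is bounded by the energy
   integral of f |v|^2 times a uniform bound for the inner hyperplane integral.
   Every point w of the hyperplane through v orthogonal to v - v' satisfies |w| >= |v|/3, hence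
   f(w) <= N |w|^(-q) and |v - w| <= 4|w|, and the inner integrand is O(N |w|^(gamma+2s+1-q)).
   Splitting the hyperplane into the dyadic shells |w| ~ 2^j |v|/3, of (d-1)-dimensional measure
   O((2^j |v|)^(d-1)), gives a geometric series of ratio 2^(d+gamma+2s-q) whose sum is
   O(6^q (1 + 1/(q-d-gamma-2s)) |v|^(d+gamma+2s-q)); finally 6^q <= C_d (1+q)^(q-d+1). *)

lemma integral_le_cmult_nn_integral:
  fixes f g :: "'b \<Rightarrow> real"
  assumes le: "\<And>x. f x \<le> c * g x" and g_nonneg: "\<And>x. 0 \<le> g x" and "0 \<le> c"
    and g: "g \<in> borel_measurable M"
    and nn: "(\<integral>\<^sup>+x. ennreal (g x) \<partial>M) \<le> ennreal B" and "0 \<le> B"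
  shows "integral\<^sup>L M f \<le> c * B"
proof (cases "integrable M f")
  case False
  then show ?thesis using assms by (simp add: not_integrable_integral_eq)
next
  case True
  have "integral\<^sup>L M f \<le> integral\<^sup>L M (\<lambda>x. max (f x) 0)"
    using True by (intro integral_mono) auto
  also have "\<dots> = enn2real (\<integral>\<^sup>+x. ennreal (max (f x) 0) \<partial>M)"
    using True by (intro integral_eq_nn_integral) auto
  also have "\<dots> \<le> c * B"
  proof (intro enn2real_leI)
    have "(\<integral>\<^sup>+x. ennreal (max (f x) 0) \<partial>M) \<le> (\<integral>\<^sup>+x. ennreal c * ennreal (g x) \<partial>M)"
      using le g_nonneg \<open>0 \<le> c\<close>
      by (intro nn_integral_mono) (auto simp flip: ennreal_mult intro: ennreal_leI)
    also have "\<dots> = ennreal c * (\<integral>\<^sup>+x. ennreal (g x) \<partial>M)"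
      using g by (simp add: nn_integral_cmult)
    also have "\<dots> \<le> ennreal (c * B)"
      using nn \<open>0 \<le> c\<close> \<open>0 \<le> B\<close> by (simp add: ennreal_mult mult_left_mono)
    finally show "(\<integral>\<^sup>+x. ennreal (max (f x) 0) \<partial>M) \<le> ennreal (c * B)" .
  qed (use assms in simp)
  finally show ?thesis .
qed

lemma emeasure_cball_le:
  fixes c :: "'a::euclidean_space"
  assumes "0 \<le> r"
  shows "emeasure lborel (cball c r) \<le> ennreal ((2 * r) ^ DIM('a))"
proof -
  have "cball c r \<subseteq> cbox (c - r *\<^sub>R One) (c + r *\<^sub>R One)"
  proof
    fix x assume "x \<in> cball c r"
    then have "\<bar>(x - c) \<bullet> i\<bar> \<le> r" if "i \<in> Basis" for i
      using Basis_le_norm[OF that, of "x - c"] by (simp add: dist_norm norm_minus_commute)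
    then show "x \<in> cbox (c - r *\<^sub>R One) (c + r *\<^sub>R One)"
      by (auto simp: mem_box abs_le_iff algebra_simps)
  qed
  then have "emeasure lborel (cball c r) \<le> emeasure lborel (cbox (c - r *\<^sub>R One) (c + r *\<^sub>R One))"
    by (intro emeasure_mono) auto
  also have "\<dots> = ennreal ((2 * r) ^ DIM('a))"
    using assms by (simp add: emeasure_lborel_cbox_eq inner_diff_left inner_add_left)
  finally show ?thesis .
qed

section \<open>Hyperplane integrals of negative powers\<close>

definition slab_cylinder :: "'a::euclidean_space \<Rightarrow> 'a \<Rightarrow> real \<Rightarrow> real \<Rightarrow> 'a set" where
  "slab_cylinder n p R t = {x. t \<le> x \<bullet> n \<and> x \<bullet> n \<le> t + 1 \<and> norm (p + (x - (x \<bullet> n) *\<^sub>R n)) \<le> R}"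

lemma slab_cylinder_sets [measurable]: "slab_cylinder n p R t \<in> sets lborel"
  unfolding slab_cylinder_def by measurable

lemma emeasure_slab_cylinder_shift:
  fixes n :: "'a::euclidean_space"
  assumes "norm n = 1"
  shows "emeasure lborel (slab_cylinder n p R t) = emeasure lborel (slab_cylinder n p R 0)"
proof -
  have "n \<bullet> n = 1" using assms by (simp add: dot_square_norm)
  then have "slab_cylinder n p R t = (+) (- (t *\<^sub>R n)) -` slab_cylinder n p R 0"
    by (auto simp: slab_cylinder_def algebra_simps)
  also have "emeasure lborel \<dots> = emeasure (distr lborel borel ((+) (- (t *\<^sub>R n)))) (slab_cylinder n p R 0)"
    using slab_cylinder_sets[of n p R 0] by (subst emeasure_distr) auto
  finally show ?thesis by (simp only: lborel_distr_plus)
qed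

(* The translates by 2k n, k < K, are disjoint and lie in a ball of radius R + 2K. *)
lemma emeasure_slab_cylinder_stack_le:
  fixes n p :: "'a::euclidean_space"
  assumes n: "norm n = 1" and R: "0 \<le> R"
  shows "of_nat K * emeasure lborel (slab_cylinder n p R 0) \<le> ennreal ((2 * (R + 2 * real K)) ^ DIM('a))"
proof -
  have disjoint: "disjoint_family_on (\<lambda>k. slab_cylinder n p R (2 * real k)) {..<K}"
    unfolding disjoint_family_on_def
  proof clarify
    fix i j :: nat assume "i \<noteq> j"
    then have "real i + 1 \<le> real j \<or> real j + 1 \<le> real i" by linarith
    then show "slab_cylinder n p R (2 * real i) \<inter> slab_cylinder n p R (2 * real j) = {}"
      by (auto simp: slab_cylinder_def)
  qed
  have stack: "(\<Union>k<K. slab_cylinder n p R (2 * real k)) \<subseteq> cball (- p) (R + 2 * real K)"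
  proof clarify
    fix k x assume k: "k < K" and x: "x \<in> slab_cylinder n p R (2 * real k)"
    have "norm (p + x) \<le> norm (p + (x - (x \<bullet> n) *\<^sub>R n)) + norm ((x \<bullet> n) *\<^sub>R n)"
      by (metis add_diff_eq diff_add_cancel norm_triangle_ineq)
    also have "\<dots> \<le> R + 2 * real K"
      using x k n by (auto simp: slab_cylinder_def)
    finally show "x \<in> cball (- p) (R + 2 * real K)"
      by (simp add: dist_norm norm_minus_commute[of "- p"] algebra_simps)
  qed
  have "(\<Sum>k<K. emeasure lborel (slab_cylinder n p R (2 * real k)))
      = (\<Sum>k<K. emeasure lborel (slab_cylinder n p R 0))"
    by (intro sum.cong refl emeasure_slab_cylinder_shift[OF n])
  then have "of_nat K * emeasure lborel (slab_cylinder n p R 0)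
      = (\<Sum>k<K. emeasure lborel (slab_cylinder n p R (2 * real k)))"
    by simp
  also have "\<dots> = emeasure lborel (\<Union>k<K. slab_cylinder n p R (2 * real k))"
    using disjoint by (intro sum_emeasure) (auto intro: slab_cylinder_sets[unfolded sets_lborel])
  also have "\<dots> \<le> emeasure lborel (cball (- p) (R + 2 * real K))"
    using stack by (intro emeasure_mono) auto
  also have "\<dots> \<le> ennreal ((2 * (R + 2 * real K)) ^ DIM('a))"
    using R by (intro emeasure_cball_le) auto
  finally show ?thesis .
qed

lemma emeasure_slab_cylinder_le:
  fixes n p :: "'a::euclidean_space"
  assumes n: "norm n = 1" and R: "2/3 \<le> R"
  shows "emeasure lborel (slab_cylinder n p R 0) \<le> ennreal (12 ^ DIM('a) * R powr (real DIM('a) - 1))"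
proof -
  define K where "K = nat \<lceil>R\<rceil>"
  have K: "R \<le> real K" "real K \<le> R + 1" "0 < K"
    using R by (auto simp: K_def)
  have "of_nat K * emeasure lborel (slab_cylinder n p R 0) \<le> ennreal ((2 * (R + 2 * real K)) ^ DIM('a))"
    using R by (intro emeasure_slab_cylinder_stack_le[OF n]) auto
  also have "\<dots> \<le> ennreal ((12 * R) ^ DIM('a))"
    using R K by (intro ennreal_leI power_mono) auto
  also have "\<dots> = of_nat K * ennreal ((12 * R) ^ DIM('a) / real K)"
    using K by (simp add: ennreal_of_nat_eq_real_of_nat flip: ennreal_mult)
  finally have "emeasure lborel (slab_cylinder n p R 0) \<le> ennreal ((12 * R) ^ DIM('a) / real K)"
    using K by (subst (asm) ennreal_mult_le_mult_iff) auto
  also have "\<dots> \<le> ennreal ((12 * R) ^ DIM('a) / R)"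
    using R K by (intro ennreal_leI divide_left_mono) auto
  also have "(12 * R) ^ DIM('a) / R = 12 ^ DIM('a) * R powr (real DIM('a) - 1)"
    using R by (simp add: powr_diff powr_realpow power_mult_distrib)
  finally show ?thesis .
qed

lemma exists_dyadic_bracket:
  fixes a h :: real
  assumes a: "0 < a" and h: "a \<le> h"
  shows "\<exists>j::nat. h \<le> 2 ^ j * a \<and> 2 ^ j * a < 2 * h"
proof -
  obtain m :: nat where "h / a < 2 ^ m"
    using real_arch_pow[of 2 "h / a"] by auto
  then have ex: "\<exists>j::nat. h \<le> 2 ^ j * a"
    using a by (intro exI[of _ m]) (simp add: field_simps)
  define j where "j = (LEAST j::nat. h \<le> 2 ^ j * a)"
  have "h \<le> 2 ^ j * a"
    unfolding j_def by (rule LeastI_ex[OF ex])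
  moreover have "2 ^ j * a < 2 * h"
  proof (cases j)
    case (Suc i)
    then have "i < j" by simp
    then have "\<not> h \<le> 2 ^ i * a"
      unfolding j_def by (rule not_less_Least)
    then show ?thesis using Suc by simp
  qed (use a h in simp)
  ultimately show ?thesis by blast
qed

lemma nn_integral_powr_le_dyadic_sum:
  fixes h :: "'b \<Rightarrow> real"
  assumes a: "0 < a" and P: "0 \<le> P" and S: "S \<in> sets M" and h: "h \<in> borel_measurable M"
    and h_ge: "\<And>x. x \<in> S \<Longrightarrow> a \<le> h x"
  shows "(\<integral>\<^sup>+x. ennreal (indicator S x * h x powr - P) \<partial>M)
    \<le> (\<Sum>j. ennreal ((2 ^ j * a / 2) powr - P) * emeasure M {x \<in> S. h x \<le> 2 ^ j * a})"
proof -
  note [measurable] = S h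
  define F where "F j x = ennreal ((2 ^ j * a / 2) powr - P) * indicator {x \<in> S. h x \<le> 2 ^ j * a} x"
    for j :: nat and x
  have "ennreal (indicator S x * h x powr - P) \<le> (\<Sum>j. F j x)" for x
  proof (cases "x \<in> S")
    case True
    obtain j :: nat where j: "h x \<le> 2 ^ j * a" "2 ^ j * a < 2 * h x"
      using exists_dyadic_bracket[OF a h_ge[OF True]] by blast
    have "h x powr - P \<le> (2 ^ j * a / 2) powr - P"
      using a P j by (intro powr_mono2') auto
    then have "ennreal (indicator S x * h x powr - P) \<le> F j x"
      using True j by (simp add: F_def ennreal_leI)
    also have "\<dots> \<le> (\<Sum>j. F j x)"
    proof -
      have "sum (\<lambda>i. F i x) {j} \<le> (\<Sum>i. F i x)" by (rule sum_le_suminf) auto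
      then show ?thesis by simp
    qed
    finally show ?thesis .
  qed simp
  then have "(\<integral>\<^sup>+x. ennreal (indicator S x * h x powr - P) \<partial>M) \<le> (\<integral>\<^sup>+x. (\<Sum>j. F j x) \<partial>M)"
    by (intro nn_integral_mono)
  also have "\<dots> = (\<Sum>j. \<integral>\<^sup>+x. F j x \<partial>M)"
    unfolding F_def by (intro nn_integral_suminf) measurable
  also have "\<dots> = (\<Sum>j. ennreal ((2 ^ j * a / 2) powr - P) * emeasure M {x \<in> S. h x \<le> 2 ^ j * a})"
    unfolding F_def by (subst nn_integral_cmult_indicator) measurable
  finally show ?thesis .
qed

lemma emeasure_slab_cylinder_dyadic_le:
  fixes n p :: "'a::euclidean_space"
  assumes n: "norm n = 1" and a: "2/3 \<le> a"
  shows "ennreal ((2 ^ j * a / 2) powr - P) * emeasure lborel (slab_cylinder n p (2 ^ j * a) 0)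
    \<le> ennreal (2 powr P * 12 ^ DIM('a) * a powr (real DIM('a) - 1 - P)
                * (2 powr (real DIM('a) - 1 - P)) ^ j)"
proof -
  define e where "e = real DIM('a) - 1 - P"
  have "(1::real) \<le> 2 ^ j" by simp
  then have R: "2/3 \<le> 2 ^ j * a"
    using a mult_right_mono[of 1 "2 ^ j" a] by linarith
  then have "ennreal ((2 ^ j * a / 2) powr - P) * emeasure lborel (slab_cylinder n p (2 ^ j * a) 0)
      \<le> ennreal ((2 ^ j * a / 2) powr - P) * ennreal (12 ^ DIM('a) * (2 ^ j * a) powr (real DIM('a) - 1))"
    by (intro mult_left_mono emeasure_slab_cylinder_le[OF n]) auto
  also have "\<dots> = ennreal ((2 ^ j * a / 2) powr - P * (12 ^ DIM('a) * (2 ^ j * a) powr (real DIM('a) - 1)))"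
    by (rule ennreal_mult[symmetric]) auto
  also have "(2 ^ j * a / 2) powr - P * (12 ^ DIM('a) * (2 ^ j * a) powr (real DIM('a) - 1))
      = 2 powr P * 12 ^ DIM('a) * a powr e * (2 powr e) ^ j"
  proof -
    have "(2 ^ j * a / 2) powr - P = 2 powr P * (2 ^ j * a) powr - P"
      using R by (simp add: powr_divide powr_minus field_simps)
    moreover have "(2 ^ j * a) powr - P * (2 ^ j * a) powr (real DIM('a) - 1) = (2 ^ j * a) powr e"
      unfolding e_def by (simp flip: powr_add)
    moreover have "(2 ^ j * a) powr e = (2 powr real j) powr e * a powr e"
      using R by (simp add: powr_mult powr_realpow)
    moreover have "(2 powr real j) powr e = (2 powr e) ^ j"
      by (simp add: powr_powr powr_power mult.commute)
    ultimately show ?thesis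
      by (simp only: mult_ac)
  qed
  finally show ?thesis unfolding e_def .
qed

lemma slab_nn_integral_powr_le:
  fixes n p :: "'a::euclidean_space"
  assumes n: "norm n = 1" and a: "2/3 \<le> a" and P: "real DIM('a) - 1 < P"
    and dist: "\<And>x. a \<le> norm (p + (x - (x \<bullet> n) *\<^sub>R n))"
  shows "(\<integral>\<^sup>+x. ennreal (indicator {x. 0 \<le> x \<bullet> n \<and> x \<bullet> n \<le> 1} x
              * norm (p + (x - (x \<bullet> n) *\<^sub>R n)) powr - P) \<partial>lborel)
    \<le> ennreal (2 powr P * 12 ^ DIM('a) * a powr (real DIM('a) - 1 - P)
                / (1 - 2 powr (real DIM('a) - 1 - P)))"
proof -
  define e where "e = real DIM('a) - 1 - P"
  define K where "K = 2 powr P * 12 ^ DIM('a) * a powr e"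
  have "0 \<le> P"
    using P DIM_positive[where 'a='a] by linarith
  have \<rho>: "0 < 2 powr e" "2 powr e < 1"
    using P unfolding e_def by (auto intro: powr_less_one)
  have "{x \<in> {x. 0 \<le> x \<bullet> n \<and> x \<bullet> n \<le> 1}. norm (p + (x - (x \<bullet> n) *\<^sub>R n)) \<le> R}
      = slab_cylinder n p R 0" for R
    by (auto simp: slab_cylinder_def)
  then have "(\<integral>\<^sup>+x. ennreal (indicator {x. 0 \<le> x \<bullet> n \<and> x \<bullet> n \<le> 1} x
              * norm (p + (x - (x \<bullet> n) *\<^sub>R n)) powr - P) \<partial>lborel)
      \<le> (\<Sum>j. ennreal ((2 ^ j * a / 2) powr - P) * emeasure lborel (slab_cylinder n p (2 ^ j * a) 0))"
    using nn_integral_powr_le_dyadic_sum[of a P "{x. 0 \<le> x \<bullet> n \<and> x \<bullet> n \<le> 1}" lborel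
        "\<lambda>x. norm (p + (x - (x \<bullet> n) *\<^sub>R n))"] a \<open>0 \<le> P\<close> dist
    by simp
  also have "\<dots> \<le> (\<Sum>j. ennreal (K * (2 powr e) ^ j))"
    unfolding K_def e_def by (intro suminf_le summableI emeasure_slab_cylinder_dyadic_le[OF n a])
  also have "\<dots> = ennreal (\<Sum>j. K * (2 powr e) ^ j)"
    using \<rho> unfolding K_def by (intro suminf_ennreal2) (auto intro: summable_mult)
  also have "(\<Sum>j. K * (2 powr e) ^ j) = K / (1 - 2 powr e)"
    using \<rho> by (simp add: suminf_mult suminf_geometric divide_inverse)
  finally show ?thesis unfolding K_def e_def .
qed

lemma hyperplane_integral_nonneg:
  assumes "\<And>w. 0 \<le> F w"
  shows "0 \<le> hyperplane_integral p u F"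
  unfolding hyperplane_integral_def Let_def set_lebesgue_integral_def
  using assms by (intro integral_nonneg_AE) auto

lemma inner_unit_le_norm_hyperplane_point:
  fixes n p x :: "'a::real_inner"
  assumes "norm n = 1"
  shows "p \<bullet> n \<le> norm (p + (x - (x \<bullet> n) *\<^sub>R n))"
proof -
  have "n \<bullet> n = 1" using assms by (simp add: dot_square_norm)
  then have "p \<bullet> n = (p + (x - (x \<bullet> n) *\<^sub>R n)) \<bullet> n"
    by (simp add: inner_add_left inner_diff_left)
  also have "\<dots> \<le> norm (p + (x - (x \<bullet> n) *\<^sub>R n))"
    using norm_cauchy_schwarz[of _ n] assms by simp
  finally show ?thesis .
qed

lemma hyperplane_integral_le_powr:
  fixes p u :: "'a::euclidean_space"
  assumes u: "u \<noteq> 0" and a: "2/3 \<le> a" "a \<le> p \<bullet> u / norm u" and P: "real DIM('a) - 1 < P"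
    and K: "0 \<le> K" and F_nonneg: "\<And>w. 0 \<le> F w"
    and F_le: "\<And>w. a \<le> norm w \<Longrightarrow> F w \<le> K * norm w powr - P"
  shows "hyperplane_integral p u F
    \<le> K * (2 powr P * 12 ^ DIM('a) * a powr (real DIM('a) - 1 - P)
              / (1 - 2 powr (real DIM('a) - 1 - P)))"
proof -
  define n where "n = u /\<^sub>R norm u"
  define S where "S = {x. 0 \<le> x \<bullet> n \<and> x \<bullet> n \<le> 1}"
  define h where "h x = norm (p + (x - (x \<bullet> n) *\<^sub>R n))" for x
  have n: "norm n = 1" using u by (simp add: n_def)
  have dist: "a \<le> h x" for x
    using a(2) inner_unit_le_norm_hyperplane_point[OF n, of p x]
    unfolding h_def n_def by (simp add: divide_inverse mult.commute)
  have "2 powr (real DIM('a) - 1 - P) < 1"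
    using P by (intro powr_less_one) auto
  then have bound_nonneg: "0 \<le> 2 powr P * 12 ^ DIM('a) * a powr (real DIM('a) - 1 - P)
              / (1 - 2 powr (real DIM('a) - 1 - P))"
    by simp
  have "hyperplane_integral p u F = (\<integral>x. indicator S x * F (p + (x - (x \<bullet> n) *\<^sub>R n)) \<partial>lborel)"
    unfolding hyperplane_integral_def Let_def set_lebesgue_integral_def n_def S_def by simp
  also have "\<dots> \<le> K * (2 powr P * 12 ^ DIM('a) * a powr (real DIM('a) - 1 - P)
              / (1 - 2 powr (real DIM('a) - 1 - P)))"
  proof (rule integral_le_cmult_nn_integral[where g = "\<lambda>x. indicator S x * h x powr - P"])
    show "indicator S x * F (p + (x - (x \<bullet> n) *\<^sub>R n)) \<le> K * (indicator S x * h x powr - P)" for x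
      using F_le[OF dist[of x, unfolded h_def]] unfolding h_def by (simp add: indicator_def)
    show "(\<lambda>x. indicator S x * h x powr - P) \<in> borel_measurable lborel"
      unfolding S_def h_def by measurable
    show "(\<integral>\<^sup>+x. ennreal (indicator S x * h x powr - P) \<partial>lborel)
        \<le> ennreal (2 powr P * 12 ^ DIM('a) * a powr (real DIM('a) - 1 - P)
              / (1 - 2 powr (real DIM('a) - 1 - P)))"
      unfolding S_def h_def by (rule slab_nn_integral_powr_le[OF n a(1) P dist[unfolded h_def]])
  qed (use K bound_nonneg in simp_all)
  finally show ?thesis .
qed

section \<open>The inner integral of B3\<close>

lemma hyperplane_distance_ge:
  fixes v v' :: "'a::real_inner"
  assumes v': "norm v' < norm v / 2"
  shows "v - v' \<noteq> 0" and "norm v / 3 \<le> v \<bullet> (v - v') / norm (v - v')"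
proof -
  have pos: "0 < norm (v - v')"
    using v' norm_triangle_ineq2[of v v'] norm_ge_zero[of v'] by linarith
  then show "v - v' \<noteq> 0" by simp
  have "norm v / 3 * norm (v - v') \<le> norm v / 3 * (3 / 2 * norm v)"
    using norm_triangle_ineq4[of v v'] v' by (intro mult_left_mono) auto
  also have "\<dots> = norm v * norm v - norm v * (norm v / 2)" by simp
  also have "\<dots> \<le> norm v * norm v - norm v * norm v'"
    using v' by (intro diff_left_mono mult_left_mono) auto
  also have "\<dots> \<le> v \<bullet> (v - v')"
    using norm_cauchy_schwarz[of v v'] by (simp add: inner_diff_right dot_square_norm power2_eq_square)
  finally show "norm v / 3 \<le> v \<bullet> (v - v') / norm (v - v')"
    using pos by (simp add: pos_le_divide_eq)
qed

lemma cos_theta_bounds: "cos_theta v v' v's \<in> {-1..1}"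
proof -
  have "\<bar>x \<bullet> y\<bar> / (norm x * norm y) \<le> 1" for x y :: 'a
  proof (cases "norm x * norm y = 0")
    case False
    then show ?thesis using Cauchy_Schwarz_ineq2[of x y] by (simp add: divide_le_eq_1_pos)
  qed auto
  then have "\<bar>cos_theta v v' v's\<bar> \<le> 1"
    unfolding cos_theta_def Let_def by (simp add: abs_mult)
  then show ?thesis by (simp add: abs_le_iff)
qed

lemma gq_le_powr:
  assumes "0 \<le> N" "0 \<le> q" "w \<noteq> 0"
  shows "gq N q w \<le> N * norm w powr - q"
proof -
  have "(if norm w \<le> 1 then 1 else norm w powr - q) \<le> norm w powr - q"
    using assms by (simp add: powr_minus one_le_inverse_iff powr_le1)
  then show ?thesis
    unfolding gq_def using assms(1) by (rule mult_left_mono)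
qed

definition B3_kernel ::
    "real \<Rightarrow> real \<Rightarrow> (real \<Rightarrow> real) \<Rightarrow> real \<Rightarrow> ('a::euclidean_space \<Rightarrow> real) \<Rightarrow> 'a \<Rightarrow> 'a \<Rightarrow> real" where
  "B3_kernel \<gamma> s b q f v v' =
     hyperplane_integral v (v - v')
       (\<lambda>v's. if c1 q * norm v \<le> norm v's
              then f v's * norm (v - v's) powr (\<gamma> + 2 * s + 1) * b (cos_theta v v' v's)
              else 0)"

lemma B3_eq_kernel:
  fixes v :: "'a::euclidean_space"
  shows "B3 \<gamma> s b q f1 f2 v =
     (LINT v' : {v'. c3 q * norm v \<le> norm v' \<and> norm v' < norm v / 2} | lborel.
        (f2 v' - f2 v) / norm (v' - v) powr (real DIM('a) + 2 * s) * B3_kernel \<gamma> s b q f1 v v')"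
  unfolding B3_def B3_kernel_def ..

lemma B3_kernel_nonneg:
  assumes "\<And>w. 0 \<le> f w" and "\<And>x. x \<in> {-1..1} \<Longrightarrow> 0 \<le> b x"
  shows "0 \<le> B3_kernel \<gamma> s b q f v v'"
proof -
  have "0 \<le> b (cos_theta v v' w)" for w
    using assms(2)[OF cos_theta_bounds] .
  then show ?thesis
    unfolding B3_kernel_def using assms(1) by (intro hyperplane_integral_nonneg) simp
qed

lemma collision_integrand_le_powr:
  fixes v w :: "'a::real_normed_vector"
  assumes w: "norm v / 3 \<le> norm w" "w \<noteq> 0" and \<kappa>: "0 \<le> \<kappa>" and q: "0 \<le> q" and N: "0 \<le> N"
    and f: "0 \<le> f w" "f w \<le> gq N q w" and \<beta>: "0 \<le> \<beta>" "\<beta> \<le> b1"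
  shows "f w * norm (v - w) powr \<kappa> * \<beta> \<le> b1 * 4 powr \<kappa> * N * norm w powr - (q - \<kappa>)"
proof -
  have "norm (v - w) \<le> 4 * norm w"
    using norm_triangle_ineq4[of v w] w by linarith
  then have "norm (v - w) powr \<kappa> \<le> 4 powr \<kappa> * norm w powr \<kappa>"
    using \<kappa> by (simp add: powr_mult[symmetric] powr_mono2)
  moreover have "f w \<le> N * norm w powr - q"
    using f gq_le_powr[OF N q w(2)] by linarith
  ultimately have "f w * norm (v - w) powr \<kappa> * \<beta> \<le> (N * norm w powr - q) * (4 powr \<kappa> * norm w powr \<kappa>) * b1"
    using f N \<beta> by (intro mult_mono) auto
  also have "\<dots> = b1 * 4 powr \<kappa> * N * (norm w powr - q * norm w powr \<kappa>)"
    by (simp only: mult_ac)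
  also have "norm w powr - q * norm w powr \<kappa> = norm w powr - (q - \<kappa>)"
    by (simp add: powr_add[symmetric])
  finally show ?thesis .
qed

lemma B3_kernel_le:
  fixes v v' :: "'a::euclidean_space"
  assumes v: "2 \<le> norm v" and v': "norm v' < norm v / 2"
    and t: "- 1 \<le> \<gamma> + 2 * s" and q: "real DIM('a) + (\<gamma> + 2 * s) < q" and N: "0 \<le> N"
    and f_nonneg: "\<And>w. 0 \<le> f w" and f_le: "\<And>w. f w \<le> gq N q w"
    and b: "\<And>x. x \<in> {-1..1} \<Longrightarrow> 0 \<le> b x \<and> b x \<le> b1"
  shows "B3_kernel \<gamma> s b q f v v'
    \<le> b1 * 4 powr (\<gamma> + 2 * s + 1) * N
       * (2 powr (q - (\<gamma> + 2 * s) - 1) * 12 ^ DIM('a) * (norm v / 3) powr (real DIM('a) + (\<gamma> + 2 * s) - q)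
          / (1 - 2 powr (real DIM('a) + (\<gamma> + 2 * s) - q)))"
proof -
  define \<kappa> where "\<kappa> = \<gamma> + 2 * s + 1"
  define F where "F w = (if c1 q * norm v \<le> norm w
         then f w * norm (v - w) powr \<kappa> * b (cos_theta v v' w) else 0)" for w
  have "0 \<le> q" "0 \<le> \<kappa>" using q t DIM_positive[where 'a='a] unfolding \<kappa>_def by linarith+
  have b_cos: "0 \<le> b (cos_theta v v' w) \<and> b (cos_theta v v' w) \<le> b1" for w
    using b[OF cos_theta_bounds] .
  then have "0 \<le> b1" by (meson order_trans)
  have F_nonneg: "0 \<le> F w" for w
    unfolding F_def using f_nonneg b_cos by simp
  have F_le: "F w \<le> b1 * 4 powr \<kappa> * N * norm w powr - (q - \<kappa>)"
    if w: "norm v / 3 \<le> norm w" for w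
  proof -
    have "w \<noteq> 0" using w v by auto
    then have "f w * norm (v - w) powr \<kappa> * b (cos_theta v v' w) \<le> b1 * 4 powr \<kappa> * N * norm w powr - (q - \<kappa>)"
      using w \<open>0 \<le> \<kappa>\<close> \<open>0 \<le> q\<close> N f_nonneg f_le b_cos by (intro collision_integrand_le_powr) auto
    moreover have "0 \<le> b1 * 4 powr \<kappa> * N * norm w powr - (q - \<kappa>)"
      using \<open>0 \<le> b1\<close> N by (intro mult_nonneg_nonneg) auto
    ultimately show ?thesis
      unfolding F_def by simp
  qed
  have exponents: "q - (\<gamma> + 2 * s + 1) = q - (\<gamma> + 2 * s) - 1"
      "real DIM('a) - 1 - (q - (\<gamma> + 2 * s) - 1) = real DIM('a) + (\<gamma> + 2 * s) - q"
    by simp_all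
  have "B3_kernel \<gamma> s b q f v v'
    \<le> b1 * 4 powr \<kappa> * N * (2 powr (q - \<kappa>) * 12 ^ DIM('a) * (norm v / 3) powr (real DIM('a) - 1 - (q - \<kappa>))
          / (1 - 2 powr (real DIM('a) - 1 - (q - \<kappa>))))"
    unfolding B3_kernel_def \<kappa>_def[symmetric] F_def[symmetric]
  proof (rule hyperplane_integral_le_powr[OF hyperplane_distance_ge(1)[OF v'] _ hyperplane_distance_ge(2)[OF v']])
    show "real DIM('a) - 1 < q - \<kappa>" using q unfolding \<kappa>_def by simp
  qed (use v N \<open>0 \<le> b1\<close> F_nonneg F_le in simp_all)
  then show ?thesis
    unfolding \<kappa>_def exponents .
qed

section \<open>The outer integral and the constant\<close>

lemma collision_outer_integrand_le:
  fixes v v' :: "'a::real_normed_vector"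
  assumes v: "v \<noteq> 0" and e: "0 \<le> e" and q: "- 1 < q" and y: "0 \<le> y" "0 \<le> y'"
    and low: "norm v / (2 * (1 + q)) \<le> norm v'" and up: "norm v' < norm v / 2"
    and k: "0 \<le> k" "k \<le> K"
  shows "(y' - y) / norm (v' - v) powr e * k
    \<le> K / (norm v / 2) powr e * (2 * (1 + q) / norm v)\<^sup>2 * (y' * (norm v')\<^sup>2)"
proof -
  have dist: "norm v / 2 \<le> norm (v' - v)"
    using norm_triangle_ineq2[of v v'] up by (simp add: norm_minus_commute)
  have "1 \<le> norm v' * (2 * (1 + q) / norm v)"
    using low v q by (simp add: field_simps)
  then have gain: "1 \<le> (norm v')\<^sup>2 * (2 * (1 + q) / norm v)\<^sup>2"
    by (metis one_le_power power_mult_distrib)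
  have "(y' - y) / norm (v' - v) powr e * k \<le> y' / norm (v' - v) powr e * k"
    using k y by (intro mult_right_mono divide_right_mono) auto
  also have "\<dots> \<le> y' / (norm v / 2) powr e * K"
    using dist k y v e by (intro mult_mono divide_left_mono powr_mono2 mult_pos_pos) auto
  also have "\<dots> \<le> y' * ((norm v')\<^sup>2 * (2 * (1 + q) / norm v)\<^sup>2) / (norm v / 2) powr e * K"
    using gain y k by (intro mult_right_mono divide_right_mono) (auto simp: mult_le_cancel_left1)
  also have "\<dots> = K / (norm v / 2) powr e * (2 * (1 + q) / norm v)\<^sup>2 * (y' * (norm v')\<^sup>2)"
    by (simp only: divide_inverse mult_ac)
  finally show ?thesis .
qed

lemma B3_le_of_kernel_le:
  fixes v :: "'a::euclidean_space"
  assumes v: "v \<noteq> 0" and s: "0 \<le> s" and q: "- 1 < q"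
    and f_nonneg: "\<And>w. 0 \<le> f w" and f_int: "integrable lborel (\<lambda>w. f w * (norm w)\<^sup>2)"
    and E: "(\<integral>w. f w * (norm w)\<^sup>2 \<partial>lborel) \<le> E"
    and kernel: "\<And>v'. norm v' < norm v / 2 \<Longrightarrow>
                   0 \<le> B3_kernel \<gamma> s b q f v v' \<and> B3_kernel \<gamma> s b q f v v' \<le> K"
  shows "B3 \<gamma> s b q f f v
    \<le> K / (norm v / 2) powr (real DIM('a) + 2 * s) * (2 * (1 + q) / norm v)\<^sup>2 * E"
proof -
  define A where "A = {v'::'a. c3 q * norm v \<le> norm v' \<and> norm v' < norm v / 2}"
  define e where "e = real DIM('a) + 2 * s"
  define M where "M = K / (norm v / 2) powr e * (2 * (1 + q) / norm v)\<^sup>2"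
  have "0 \<le> K" using kernel[of 0] v by auto
  then have "0 \<le> M" unfolding M_def by simp
  have "0 \<le> (\<integral>w. f w * (norm w)\<^sup>2 \<partial>lborel)"
    using f_nonneg by (intro integral_nonneg_AE) auto
  then have "0 \<le> E" using E by linarith
  have "B3 \<gamma> s b q f f v = (\<integral>v'. indicator A v' *
      ((f v' - f v) / norm (v' - v) powr e * B3_kernel \<gamma> s b q f v v') \<partial>lborel)"
    unfolding B3_eq_kernel set_lebesgue_integral_def A_def e_def by simp
  also have "\<dots> \<le> M * E"
  proof (rule integral_le_cmult_nn_integral[where g = "\<lambda>w. f w * (norm w)\<^sup>2"])
    fix v' :: 'a
    \<comment> \<open>Drop f v, then trade f v' for the energy density via norm v' >= norm v / (2 (1 + q)).\<close>
    show "indicator A v' * ((f v' - f v) / norm (v' - v) powr e * B3_kernel \<gamma> s b q f v v')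
      \<le> M * (f v' * (norm v')\<^sup>2)"
    proof (cases "v' \<in> A")
      case True
      then have "norm v / (2 * (1 + q)) \<le> norm v'" and up: "norm v' < norm v / 2"
        unfolding A_def c3_def by auto
      then have "(f v' - f v) / norm (v' - v) powr e * B3_kernel \<gamma> s b q f v v'
          \<le> M * (f v' * (norm v')\<^sup>2)"
        using v s q f_nonneg kernel[OF up] unfolding M_def e_def
        by (intro collision_outer_integrand_le) auto
      then show ?thesis
        using True by simp
    qed (use \<open>0 \<le> M\<close> f_nonneg in simp)
    show "(\<integral>\<^sup>+w. ennreal (f w * (norm w)\<^sup>2) \<partial>lborel) \<le> ennreal E"
      using E f_nonneg by (simp add: nn_integral_eq_integral[OF f_int] ennreal_leI)
  qed (use \<open>0 \<le> M\<close> \<open>0 \<le> E\<close> f_nonneg borel_measurable_integrable[OF f_int] in simp_all)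
  finally show ?thesis unfolding M_def e_def .
qed

lemma collision_bound_scaling:
  fixes x D \<gamma> s q :: real
  assumes x: "0 < x"
  shows "(x / 3) powr (D + (\<gamma> + 2 * s) - q) / (x / 2) powr (D + 2 * s) * (2 * (1 + q) / x)\<^sup>2
    = 3 powr (q - D - (\<gamma> + 2 * s)) * 2 powr (D + 2 * s) * 4 * (1 + q)\<^sup>2 * (x powr (\<gamma> - 2) * x powr - q)"
proof -
  define e where "e = D + (\<gamma> + 2 * s) - q"
  have "e = (\<gamma> - 2) + - q + (D + 2 * s) + 2"
    unfolding e_def by simp
  then have "x powr e = x powr (\<gamma> - 2) * x powr - q * x powr (D + 2 * s) * x powr 2"
    by (simp only: powr_add)
  then have x_e: "x powr e = x powr (\<gamma> - 2) * x powr - q * x powr (D + 2 * s) * x\<^sup>2"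
    using x by simp
  have "q - D - (\<gamma> + 2 * s) = - e"
    unfolding e_def by simp
  then have three: "3 powr (q - D - (\<gamma> + 2 * s)) = 1 / 3 powr e"
    by (simp add: powr_minus_divide)
  have "(2 * (1 + q) / x)\<^sup>2 = 4 * (1 + q)\<^sup>2 / x\<^sup>2"
    by (simp only: power_divide power_mult_distrib) simp
  then have "(x / 3) powr e / (x / 2) powr (D + 2 * s) * (2 * (1 + q) / x)\<^sup>2
      = x powr e / 3 powr e / (x powr (D + 2 * s) / 2 powr (D + 2 * s)) * (4 * (1 + q)\<^sup>2 / x\<^sup>2)"
    using x by (simp add: powr_divide)
  then show ?thesis
    unfolding e_def[symmetric] x_e three using x by (simp add: field_simps)
qed

lemma B3_le_dyadic:
  fixes v :: "'a::euclidean_space"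
  assumes v: "2 \<le> norm v" and s: "0 \<le> s" and t: "- 1 \<le> \<gamma> + 2 * s"
    and q: "real DIM('a) + (\<gamma> + 2 * s) < q" and N: "0 \<le> N"
    and f_nonneg: "\<And>w. 0 \<le> f w" and f_le: "\<And>w. f w \<le> gq N q w"
    and f_int: "integrable lborel (\<lambda>w. f w * (norm w)\<^sup>2)"
    and E: "(\<integral>w. f w * (norm w)\<^sup>2 \<partial>lborel) \<le> E"
    and b: "\<And>x. x \<in> {-1..1} \<Longrightarrow> 0 \<le> b x \<and> b x \<le> b1"
  shows "B3 \<gamma> s b q f f v
    \<le> b1 * 4 powr (\<gamma> + 2 * s + 1) * 12 ^ DIM('a) * 2 powr (real DIM('a) + 2 * s) * 4 * E
       * (2 powr (q - (\<gamma> + 2 * s) - 1) * 3 powr (q - real DIM('a) - (\<gamma> + 2 * s))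
           / (1 - 2 powr (real DIM('a) + (\<gamma> + 2 * s) - q)))
       * ((1 + q)\<^sup>2 * norm v powr (\<gamma> - 2) * gq N q v)"
proof -
  define x where "x = norm v"
  define e where "e = real DIM('a) + (\<gamma> + 2 * s) - q"
  define c where "c = b1 * 4 powr (\<gamma> + 2 * s + 1) * N * (2 powr (q - (\<gamma> + 2 * s) - 1) * 12 ^ DIM('a)
      / (1 - 2 powr e))"
  have x: "0 < x" using v unfolding x_def by linarith
  have "0 < q" using q t DIM_positive[where 'a='a] by linarith
  have gq: "gq N q v = N * norm v powr - q"
    using v unfolding gq_def by simp
  have scaling: "(x / 3) powr e / (x / 2) powr (real DIM('a) + 2 * s) * (2 * (1 + q) / x)\<^sup>2
      = 3 powr (q - real DIM('a) - (\<gamma> + 2 * s)) * 2 powr (real DIM('a) + 2 * s) * 4 * (1 + q)\<^sup>2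
        * (x powr (\<gamma> - 2) * x powr - q)"
    unfolding e_def by (rule collision_bound_scaling[OF x])
  have "B3 \<gamma> s b q f f v
      \<le> c * (x / 3) powr e / (x / 2) powr (real DIM('a) + 2 * s) * (2 * (1 + q) / x)\<^sup>2 * E"
    unfolding x_def
  proof (rule B3_le_of_kernel_le[OF _ s _ f_nonneg f_int E])
    fix v' :: 'a assume v': "norm v' < norm v / 2"
    have "0 \<le> B3_kernel \<gamma> s b q f v v'"
      using b by (intro B3_kernel_nonneg[OF f_nonneg]) auto
    moreover have "B3_kernel \<gamma> s b q f v v' \<le> c * (norm v / 3) powr e"
      using B3_kernel_le[OF v v' t q N f_nonneg f_le b]
      unfolding c_def e_def by (simp only: divide_inverse mult_ac)
    ultimately show "0 \<le> B3_kernel \<gamma> s b q f v v' \<and> B3_kernel \<gamma> s b q f v v' \<le> c * (norm v / 3) powr e"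
      by simp
  qed (use x \<open>0 < q\<close> in \<open>auto simp: x_def\<close>)
  also have "\<dots> = c * (3 powr (q - real DIM('a) - (\<gamma> + 2 * s)) * 2 powr (real DIM('a) + 2 * s) * 4
      * (1 + q)\<^sup>2 * (x powr (\<gamma> - 2) * x powr - q)) * E"
    unfolding scaling[symmetric] by (simp only: divide_inverse mult.assoc)
  also have "\<dots> = b1 * 4 powr (\<gamma> + 2 * s + 1) * 12 ^ DIM('a) * 2 powr (real DIM('a) + 2 * s) * 4 * E
       * (2 powr (q - (\<gamma> + 2 * s) - 1) * 3 powr (q - real DIM('a) - (\<gamma> + 2 * s))
           / (1 - 2 powr (real DIM('a) + (\<gamma> + 2 * s) - q)))
       * ((1 + q)\<^sup>2 * norm v powr (\<gamma> - 2) * gq N q v)"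
    unfolding c_def e_def x_def gq by (simp only: divide_inverse mult_ac)
  finally show ?thesis .
qed

lemma inverse_one_minus_two_powr_le:
  fixes \<epsilon> :: real
  assumes "0 < \<epsilon>"
  shows "1 / (1 - 2 powr - \<epsilon>) \<le> 1 + 2 / \<epsilon>"
proof -
  define y where "y = \<epsilon> * ln 2"
  have "2/3 \<le> ln (2::real)" by (rule ln2_ge_two_thirds)
  then have y: "0 < y" "\<epsilon> \<le> 2 * y"
    using assms unfolding y_def by auto
  have "exp (- y) \<le> 1 / (1 + y)"
    using exp_ge_add_one_self[of y] y by (simp add: exp_minus field_simps)
  then have "y / (1 + y) \<le> 1 - 2 powr - \<epsilon>"
    using y unfolding y_def by (simp add: powr_def field_simps)
  moreover have "2 powr - \<epsilon> < 1"
    using assms by (intro powr_less_one) auto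
  ultimately have "1 / (1 - 2 powr - \<epsilon>) \<le> 1 / (y / (1 + y))"
    using y by (intro divide_left_mono mult_pos_pos) auto
  also have "\<dots> = 1 + 1 / y"
    using y by (simp add: field_simps)
  also have "\<dots> \<le> 1 + 2 / \<epsilon>"
    using y assms by (simp add: field_simps)
  finally show ?thesis .
qed

lemma six_powr_le:
  fixes D q :: real
  assumes D: "0 \<le> D" and q: "D < q"
  shows "6 powr q \<le> 6 powr (2 * D + 35) * (1 + q) powr (q - (D - 1))"
proof (cases "q \<le> 2 * D + 35")
  case True
  have "1 \<le> (1 + q) powr (q - (D - 1))"
    using D q by (intro ge_one_powr_ge_zero) auto
  have "6 powr q \<le> 6 powr (2 * D + 35)"
    using True by simp
  also have "\<dots> \<le> 6 powr (2 * D + 35) * (1 + q) powr (q - (D - 1))"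
    using \<open>1 \<le> (1 + q) powr (q - (D - 1))\<close> by (simp add: mult_le_cancel_left1)
  finally show ?thesis .
next
  case False
  then have "6 \<le> sqrt (1 + q)"
    using D by (intro real_le_rsqrt) auto
  then have "6 powr q \<le> sqrt (1 + q) powr q"
    using False D by (intro powr_mono2) auto
  also have "\<dots> = (1 + q) powr (q / 2)"
    using False D by (simp add: powr_half_sqrt[symmetric] powr_powr)
  also have "\<dots> \<le> (1 + q) powr (q - (D - 1))"
    using False D by (intro powr_mono) auto
  also have "\<dots> \<le> 6 powr (2 * D + 35) * (1 + q) powr (q - (D - 1))"
    using D by (simp add: mult_le_cancel_right1 ge_one_powr_ge_zero)
  finally show ?thesis .
qed

lemma six_powr_mult_le:
  fixes D t q :: real
  assumes D: "0 \<le> D" and t: "0 \<le> t" "t \<le> 2" and q: "D + t < q"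
  shows "6 powr q * (1 + 2 / (q - (D + t)))
    \<le> 3 * 6 powr (2 * D + 35) * ((1 + q) powr (q - (D - 1)) + 1 / (q - (D + t)))"
proof -
  define \<epsilon> where "\<epsilon> = q - (D + t)"
  define Z where "Z = (1 + q) powr (q - (D - 1))"
  have \<epsilon>: "0 < \<epsilon>" using q unfolding \<epsilon>_def by simp
  have "0 \<le> Z" unfolding Z_def by simp
  show ?thesis
    unfolding \<epsilon>_def[symmetric] Z_def[symmetric]
  proof (cases "\<epsilon> \<le> 1")
    case True
    then have "6 powr q \<le> 6 powr (2 * D + 35)"
      using t D unfolding \<epsilon>_def by simp
    moreover have "1 + 2 / \<epsilon> \<le> 3 / \<epsilon>"
      using True \<epsilon> by (simp add: field_simps)
    ultimately have "6 powr q * (1 + 2 / \<epsilon>) \<le> 6 powr (2 * D + 35) * (3 / \<epsilon>)"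
      using \<epsilon> by (intro mult_mono) auto
    also have "\<dots> = 3 * 6 powr (2 * D + 35) * (0 + 1 / \<epsilon>)"
      by simp
    also have "\<dots> \<le> 3 * 6 powr (2 * D + 35) * (Z + 1 / \<epsilon>)"
      using \<open>0 \<le> Z\<close> by (intro mult_left_mono add_right_mono) auto
    finally show "6 powr q * (1 + 2 / \<epsilon>) \<le> 3 * 6 powr (2 * D + 35) * (Z + 1 / \<epsilon>)" .
  next
    case False
    then have "1 + 2 / \<epsilon> \<le> 3" by (simp add: field_simps)
    moreover have "6 powr q \<le> 6 powr (2 * D + 35) * Z"
      unfolding Z_def using D q t by (intro six_powr_le) auto
    ultimately have "6 powr q * (1 + 2 / \<epsilon>) \<le> 6 powr (2 * D + 35) * Z * 3"
      using \<epsilon> \<open>0 \<le> Z\<close> by (intro mult_mono) auto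
    also have "\<dots> \<le> 3 * 6 powr (2 * D + 35) * (Z + 1 / \<epsilon>)"
      using \<epsilon> by (simp add: ring_distribs)
    finally show "6 powr q * (1 + 2 / \<epsilon>) \<le> 3 * 6 powr (2 * D + 35) * (Z + 1 / \<epsilon>)" .
  qed
qed

lemma dyadic_constant_le:
  fixes D t q :: real
  assumes D: "0 \<le> D" and t: "0 \<le> t" "t \<le> 2" and q: "D + t < q"
  shows "2 powr (q - t - 1) * 3 powr (q - D - t) / (1 - 2 powr (D + t - q))
    \<le> 3 * 6 powr (2 * D + 35) * ((1 + q) powr (q - (D - 1)) + 1 / (q - (D + t)))"
proof -
  have "2 powr (q - t - 1) * 3 powr (q - D - t) \<le> 2 powr q * 3 powr q"
    using t D by (intro mult_mono) auto
  also have "\<dots> = 6 powr q"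
    by (simp flip: powr_mult)
  finally have numerator: "2 powr (q - t - 1) * 3 powr (q - D - t) \<le> 6 powr q" .
  have denominator: "1 / (1 - 2 powr (D + t - q)) \<le> 1 + 2 / (q - (D + t))"
    using inverse_one_minus_two_powr_le[of "q - (D + t)"] q by simp
  have "2 powr (D + t - q) < 1"
    using q by (intro powr_less_one) auto
  then have "2 powr (q - t - 1) * 3 powr (q - D - t) / (1 - 2 powr (D + t - q))
      \<le> 6 powr q * (1 + 2 / (q - (D + t)))"
    using mult_mono[OF numerator denominator] by simp
  also have "\<dots> \<le> 3 * 6 powr (2 * D + 35) * ((1 + q) powr (q - (D - 1)) + 1 / (q - (D + t)))"
    by (rule six_powr_mult_le[OF D t q])
  finally show ?thesis .
qed

lemma B3_le:
  fixes v :: "'a::euclidean_space"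
  assumes v: "2 \<le> norm v" and s: "0 \<le> s" and t: "0 \<le> \<gamma> + 2 * s" "\<gamma> + 2 * s \<le> 2"
    and q: "real DIM('a) + \<gamma> + 2 * s < q" and N: "0 \<le> N"
    and f_nonneg: "\<And>w. 0 \<le> f w" and f_le: "\<And>w. f w \<le> gq N q w"
    and f_int: "integrable lborel (\<lambda>w. f w * (norm w)\<^sup>2)"
    and E: "(\<integral>w. f w * (norm w)\<^sup>2 \<partial>lborel) \<le> E"
    and b: "\<And>x. x \<in> {-1..1} \<Longrightarrow> 0 \<le> b x \<and> b x \<le> b1"
  shows "B3 \<gamma> s b q f f v
    \<le> b1 * 4 powr (\<gamma> + 2 * s + 1) * 12 ^ DIM('a) * 2 powr (real DIM('a) + 2 * s) * 4 * E
       * (3 * 6 powr (2 * real DIM('a) + 35)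
          * ((1 + q) powr (q - (real DIM('a) - 1)) + 1 / (q - (real DIM('a) + \<gamma> + 2 * s))))
       * ((1 + q)\<^sup>2 * norm v powr (\<gamma> - 2) * gq N q v)"
proof -
  have q': "real DIM('a) + (\<gamma> + 2 * s) < q" using q by simp
  have "0 \<le> b1" using b[of 0] by auto
  have "0 \<le> (\<integral>w. f w * (norm w)\<^sup>2 \<partial>lborel)"
    using f_nonneg by (intro integral_nonneg_AE) auto
  then have "0 \<le> E" using E by linarith
  have "2 powr (real DIM('a) + (\<gamma> + 2 * s) - q) < 1"
    using q' by (intro powr_less_one) auto
  then have W_nonneg: "0 \<le> 2 powr (q - (\<gamma> + 2 * s) - 1) * 3 powr (q - real DIM('a) - (\<gamma> + 2 * s))
        / (1 - 2 powr (real DIM('a) + (\<gamma> + 2 * s) - q))"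
    by simp
  have W_le: "2 powr (q - (\<gamma> + 2 * s) - 1) * 3 powr (q - real DIM('a) - (\<gamma> + 2 * s))
        / (1 - 2 powr (real DIM('a) + (\<gamma> + 2 * s) - q))
      \<le> 3 * 6 powr (2 * real DIM('a) + 35)
        * ((1 + q) powr (q - (real DIM('a) - 1)) + 1 / (q - (real DIM('a) + \<gamma> + 2 * s)))"
    using dyadic_constant_le[of "real DIM('a)" "\<gamma> + 2 * s" q] t q'
    unfolding add.assoc by simp
  have "B3 \<gamma> s b q f f v
    \<le> b1 * 4 powr (\<gamma> + 2 * s + 1) * 12 ^ DIM('a) * 2 powr (real DIM('a) + 2 * s) * 4 * E
       * (2 powr (q - (\<gamma> + 2 * s) - 1) * 3 powr (q - real DIM('a) - (\<gamma> + 2 * s))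
           / (1 - 2 powr (real DIM('a) + (\<gamma> + 2 * s) - q)))
       * ((1 + q)\<^sup>2 * norm v powr (\<gamma> - 2) * gq N q v)"
    by (rule B3_le_dyadic[OF v s _ q' N f_nonneg f_le f_int E]) (use t b in auto)
  also have "\<dots> \<le> b1 * 4 powr (\<gamma> + 2 * s + 1) * 12 ^ DIM('a) * 2 powr (real DIM('a) + 2 * s) * 4 * E
       * (3 * 6 powr (2 * real DIM('a) + 35)
          * ((1 + q) powr (q - (real DIM('a) - 1)) + 1 / (q - (real DIM('a) + \<gamma> + 2 * s))))
       * ((1 + q)\<^sup>2 * norm v powr (\<gamma> - 2) * gq N q v)"
    using W_le \<open>0 \<le> b1\<close> \<open>0 \<le> E\<close> N
    by (intro mult_right_mono mult_left_mono) (simp_all add: gq_def)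
  finally show ?thesis .
qed

theorem proposition3p9:
  fixes \<gamma> s b0 b1 m0 M0 E0 H0 :: real
  assumes "DIM('a::euclidean_space) \<ge> 2"
    and "0 < s" and "s < 1"
    and "0 \<le> \<gamma> + 2 * s" and "\<gamma> + 2 * s \<le> 2"
    and "0 < b0" and "b0 \<le> b1"
    and "0 < m0"
  shows "\<exists>C>0. \<forall>(b :: real \<Rightarrow> real) (f :: 'a \<Rightarrow> real) (q :: real) (N :: real) (v :: 'a).
           smooth_on_interval b \<and> (\<forall>x\<in>{-1..1}. b0 \<le> b x \<and> b x \<le> b1) \<and>
           hydro_bounds m0 M0 E0 H0 f \<and>
           q > real DIM('a) + \<gamma> + 2 * s \<and> N > 0 \<and> (\<forall>w. f w \<le> gq N q w) \<and>
           norm v \<ge> 2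
           \<longrightarrow> B3 \<gamma> s b q f f v \<le>
               C * (1 + q)\<^sup>2 * ((1 + q) powr (q - (real DIM('a) - 1))
                               + 1 / (q - (real DIM('a) + \<gamma> + 2 * s)))
                 * norm v powr (\<gamma> - 2) * gq N q v"
proof -
  \<comment> \<open>max E0 1 rather than E0: C may not depend on f, and E0 < 0 is possible when no f is admissible.\<close>
  define C where "C = b1 * 4 powr (\<gamma> + 2 * s + 1) * 12 ^ DIM('a) * 2 powr (real DIM('a) + 2 * s) * 4
    * max E0 1 * (3 * 6 powr (2 * real DIM('a) + 35))"
  have "0 < C" using assms unfolding C_def by auto
  show ?thesis
  proof (intro exI[of _ C] conjI allI impI)
    fix b :: "real \<Rightarrow> real" and f :: "'a \<Rightarrow> real" and q N :: real and v :: 'a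
    assume H: "smooth_on_interval b \<and> (\<forall>x\<in>{-1..1}. b0 \<le> b x \<and> b x \<le> b1) \<and>
      hydro_bounds m0 M0 E0 H0 f \<and> q > real DIM('a) + \<gamma> + 2 * s \<and> N > 0 \<and>
      (\<forall>w. f w \<le> gq N q w) \<and> norm v \<ge> 2"
    have b: "0 \<le> b x \<and> b x \<le> b1" if "x \<in> {-1..1}" for x
      using H that \<open>0 < b0\<close> by (meson dual_order.trans less_imp_le)
    have "B3 \<gamma> s b q f f v
      \<le> b1 * 4 powr (\<gamma> + 2 * s + 1) * 12 ^ DIM('a) * 2 powr (real DIM('a) + 2 * s) * 4 * max E0 1
       * (3 * 6 powr (2 * real DIM('a) + 35)
          * ((1 + q) powr (q - (real DIM('a) - 1)) + 1 / (q - (real DIM('a) + \<gamma> + 2 * s))))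
       * ((1 + q)\<^sup>2 * norm v powr (\<gamma> - 2) * gq N q v)"
      using H assms by (intro B3_le[OF _ _ _ _ _ _ _ _ _ _ b]) (auto simp: hydro_bounds_def intro: max.coboundedI1)
    then show "B3 \<gamma> s b q f f v \<le> C * (1 + q)\<^sup>2 * ((1 + q) powr (q - (real DIM('a) - 1))
        + 1 / (q - (real DIM('a) + \<gamma> + 2 * s))) * norm v powr (\<gamma> - 2) * gq N q v"
      unfolding C_def by (simp only: mult_ac)
  qed (use \<open>0 < C\<close> in simp)
qed

end
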